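(* Let $\Theta$ be a well-formed System $\mathsf{F_\wedge}$ context, $S_0,T_0$ types over $\Theta$, and $S_1,T_1$ types over $\Theta, X<:S_0$. If $\Theta \vdash T_0 <: S_0$ and $\Theta, X <: S_0 \vdash S_1 <: T_1$, then $\Theta \vdash \forall X.\,S_1[X\wedge S_0/X] <: \forall X.\,T_1[X\wedge T_0/X^-]$.
   Context: System $\mathsf{F_\wedge}$: raw types $T ::= \top \mid X \mid T \to T \mid \forall X.T \mid T \wedge T$, identified up to $\alpha$-conversion. Contexts are finite sequences of assumptions $X<:T$ or $x:T$ with distinct variables, each type well-formed over the preceding part. Subtyping $\Theta \vdash S <: T$ is generated by: (Var) $\Theta, X<:T,\Theta' \vdash X <: T$; (Top) $T <: \top$; (Refl); (Trans); ($\to$) from $S'<:S$ and $T<:T'$ infer $S\to T <: S' \to T'$; ($\forall$) from $\Theta, X<:\top \vdash S <: T$ infer $\Theta \vdash \forall X.S <: \forall X.T$; (meet) $S\wedge S' <: S$, $S \wedge S' <: S'$, and from $T<:S$, $T<:S'$ infer $T <: S\wedge S'$. $T[U/X]$ is ordinary capture-avoiding substitution. Mixed substitution $T[(S_-,S_+)/X]$: $X \mapsto S_+$; $Y \mapsto Y$ for $Y\not\equiv X$; $\top\mapsto\top$; $(T\to T')[(S_-,S_+)/X] = T[(S_+,S_-)/X] \to T'[(S_-,S_+)/X]$; it commutes with $\forall Y$ and $\wedge$. $T[U/X^-]$ abbreviates $T[(U,X)/X]$ (only negative occurrences of $X$ replaced by $U$). *)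

theory Defs
  imports Main
begin

text \<open>TVar i refers to the i-th binding of the
  context counting from the most recent one (index 0); contexts are lists
  whose head is the most recent binding; both type-variable and term-variable
  bindings occupy a position.\<close>

datatype ty = Top | TVar nat | Arr ty ty | All ty | Meet ty ty

datatype binding = TVarB ty | VarB ty

type_synonym env = "binding list"

fun shift :: "nat \<Rightarrow> nat \<Rightarrow> ty \<Rightarrow> ty" where
  "shift d c Top = Top"
| "shift d c (TVar i) = TVar (if i < c then i else i + d)"
| "shift d c (Arr S T) = Arr (shift d c S) (shift d c T)"
| "shift d c (All T) = All (shift d (Suc c) T)"
| "shift d c (Meet S T) = Meet (shift d c S) (shift d c T)"

text \<open>Ordinary capture-avoiding substitution T[U/X] where X is index k and U lives
  in the same context as T (so no variable is removed).\<close>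
fun tsubst :: "nat \<Rightarrow> ty \<Rightarrow> ty \<Rightarrow> ty" where
  "tsubst k U Top = Top"
| "tsubst k U (TVar i) = (if i = k then U else TVar i)"
| "tsubst k U (Arr S T) = Arr (tsubst k U S) (tsubst k U T)"
| "tsubst k U (All T) = All (tsubst (Suc k) (shift 1 0 U) T)"
| "tsubst k U (Meet S T) = Meet (tsubst k U S) (tsubst k U T)"

fun msubst :: "nat \<Rightarrow> ty \<Rightarrow> ty \<Rightarrow> ty \<Rightarrow> ty" where
  "msubst k Sm Sp Top = Top"
| "msubst k Sm Sp (TVar i) = (if i = k then Sp else TVar i)"
| "msubst k Sm Sp (Arr S T) = Arr (msubst k Sp Sm S) (msubst k Sm Sp T)"
| "msubst k Sm Sp (All T) = All (msubst (Suc k) (shift 1 0 Sm) (shift 1 0 Sp) T)"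
| "msubst k Sm Sp (Meet S T) = Meet (msubst k Sm Sp S) (msubst k Sm Sp T)"

definition nsubst :: "nat \<Rightarrow> ty \<Rightarrow> ty \<Rightarrow> ty" where
  "nsubst k U T = msubst k U (TVar k) T"

fun is_TVarB :: "binding \<Rightarrow> bool" where
  "is_TVarB (TVarB _) = True"
| "is_TVarB (VarB _) = False"

fun wf_ty :: "env \<Rightarrow> ty \<Rightarrow> bool" where
  "wf_ty \<Gamma> Top = True"
| "wf_ty \<Gamma> (TVar i) = (i < length \<Gamma> \<and> is_TVarB (\<Gamma> ! i))"
| "wf_ty \<Gamma> (Arr S T) = (wf_ty \<Gamma> S \<and> wf_ty \<Gamma> T)"
| "wf_ty \<Gamma> (All T) = wf_ty (TVarB Top # \<Gamma>) T"
| "wf_ty \<Gamma> (Meet S T) = (wf_ty \<Gamma> S \<and> wf_ty \<Gamma> T)"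

fun wf_env :: "env \<Rightarrow> bool" where
  "wf_env [] = True"
| "wf_env (TVarB T # \<Gamma>) = (wf_env \<Gamma> \<and> wf_ty \<Gamma> T)"
| "wf_env (VarB T # \<Gamma>) = (wf_env \<Gamma> \<and> wf_ty \<Gamma> T)"

inductive sub :: "env \<Rightarrow> ty \<Rightarrow> ty \<Rightarrow> bool" where
  SVar: "i < length \<Gamma> \<Longrightarrow> \<Gamma> ! i = TVarB U \<Longrightarrow> sub \<Gamma> (TVar i) (shift (Suc i) 0 U)"
| STop: "sub \<Gamma> T Top"
| SRefl: "sub \<Gamma> T T"
| STrans: "sub \<Gamma> S U \<Longrightarrow> sub \<Gamma> U T \<Longrightarrow> sub \<Gamma> S T"
| SArr: "sub \<Gamma> S' S \<Longrightarrow> sub \<Gamma> T T' \<Longrightarrow> sub \<Gamma> (Arr S T) (Arr S' T')"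
| SAll: "sub (TVarB Top # \<Gamma>) S T \<Longrightarrow> sub \<Gamma> (All S) (All T)"
| SMeet1: "sub \<Gamma> (Meet S S') S"
| SMeet2: "sub \<Gamma> (Meet S S') S'"
| SMeetI: "sub \<Gamma> T S \<Longrightarrow> sub \<Gamma> T S' \<Longrightarrow> sub \<Gamma> T (Meet S S')"

end

theory Submission
  imports Defs
begin

text \<open>Substituting \<open>X \<and> S\<^sub>0\<close> for \<open>X\<close> removes the need for the bound \<open>X <: S\<^sub>0\<close>: every
  use of that bound becomes the meet projection \<open>X \<and> S\<^sub>0 <: S\<^sub>0\<close>, so
  \<open>\<Theta>, X <: \<top> \<turnstile> S\<^sub>1[X\<and>S\<^sub>0/X] <: T\<^sub>1[X\<and>S\<^sub>0/X]\<close>. Mixed substitution is monotone in the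
  replacement for the positive occurrences and antitone in the one for the negative
  occurrences; since \<open>X \<and> T\<^sub>0 <: X \<and> S\<^sub>0 <: X\<close>, this gives
  \<open>T\<^sub>1[X\<and>S\<^sub>0/X] <: T\<^sub>1[(X\<and>T\<^sub>0, X)/X] = T\<^sub>1[X\<and>T\<^sub>0/X\<^sup>-]\<close>. Transitivity and the
  \<open>\<forall>\<close> rule conclude.\<close>

lemma shift_shift:
  "c' \<le> c \<Longrightarrow> c \<le> c' + d' \<Longrightarrow> shift d c (shift d' c' T) = shift (d + d') c' T"
  by (induction T arbitrary: c c') auto

lemma tsubst_shift:
  "c \<le> k \<Longrightarrow> k < c + d \<Longrightarrow> tsubst k U (shift d c T) = shift d c T"
  by (induction T arbitrary: c k U) auto

lemma tsubst_eq_msubst: "tsubst k U T = msubst k U U T"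
  by (induction T arbitrary: k U) auto

text \<open>The \<open>\<forall>\<close> rule pushes only \<open>Top\<close> bindings, so induction on a derivation
  must allow a prefix of them in front of the position being changed.\<close>

lemma sub_weakening:
  assumes "sub \<Gamma> S T" and "\<Gamma> = replicate c (TVarB Top) @ \<Theta>"
  shows "sub (replicate c (TVarB Top) @ B # \<Theta>) (shift 1 c S) (shift 1 c T)"
  using assms
proof (induction arbitrary: c rule: sub.induct)
  case (SVar i \<Gamma> U)
  let ?\<Gamma>' = "replicate c (TVarB Top) @ B # \<Theta>"
  show ?case
  proof (cases "i < c")
    case True
    then have "U = Top" using SVar by (simp add: nth_append)
    then show ?thesis using True by (simp add: sub.STop)
  next
    case False
    then have "Suc i < length ?\<Gamma>'" and "?\<Gamma>' ! Suc i = TVarB U"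
      using SVar by (auto simp: nth_append Suc_diff_le)
    then have "sub ?\<Gamma>' (TVar (Suc i)) (shift (Suc (Suc i)) 0 U)"
      by (rule sub.SVar)
    moreover have "shift 1 c (shift (Suc i) 0 U) = shift (Suc (Suc i)) 0 U"
      using False by (simp add: shift_shift)
    ultimately show ?thesis using False by simp
  qed
next
  case (SAll \<Gamma> S T)
  have "sub (replicate (Suc c) (TVarB Top) @ B # \<Theta>) (shift 1 (Suc c) S) (shift 1 (Suc c) T)"
    using SAll.IH[of "Suc c"] SAll.prems by simp
  then show ?case by (simp add: sub.SAll)
qed (auto intro: sub.intros)

lemma sub_weakening_Cons: "sub \<Gamma> S T \<Longrightarrow> sub (B # \<Gamma>) (shift 1 0 S) (shift 1 0 T)"
  using sub_weakening[of \<Gamma> S T 0 \<Gamma> B] by simp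

lemma sub_tsubst_Meet_bound:
  assumes "sub \<Gamma> S T" and "\<Gamma> = replicate k (TVarB Top) @ TVarB B # \<Theta>"
  shows "sub (replicate k (TVarB Top) @ TVarB Top # \<Theta>)
             (tsubst k (Meet (TVar k) (shift (Suc k) 0 B)) S)
             (tsubst k (Meet (TVar k) (shift (Suc k) 0 B)) T)"
  using assms
proof (induction arbitrary: k rule: sub.induct)
  case (SVar i \<Gamma> U)
  let ?V = "Meet (TVar k) (shift (Suc k) 0 B)"
  let ?\<Gamma>' = "replicate k (TVarB Top) @ TVarB Top # \<Theta>"
  consider (below) "i < k" | (bound) "i = k" | (above) "k < i"
    by linarith
  then show ?case
  proof cases
    case below
    then have "U = Top" using SVar by (simp add: nth_append)
    then show ?thesis using below by (simp add: sub.STop)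
  next
    case bound
    then have "U = B" using SVar by (simp add: nth_append)
    moreover have "tsubst k ?V (shift (Suc k) 0 B) = shift (Suc k) 0 B"
      by (simp add: tsubst_shift)
    ultimately show ?thesis using bound by (simp add: sub.SMeet2)
  next
    case above
    then have "i < length ?\<Gamma>'" and "?\<Gamma>' ! i = TVarB U"
      using SVar by (auto simp: nth_append nth_Cons split: nat.splits)
    then have "sub ?\<Gamma>' (TVar i) (shift (Suc i) 0 U)"
      by (rule sub.SVar)
    moreover have "tsubst k ?V (shift (Suc i) 0 U) = shift (Suc i) 0 U"
      using above by (simp add: tsubst_shift)
    ultimately show ?thesis using above by simp
  qed
next
  case (SAll \<Gamma> S T)
  have "shift 1 0 (Meet (TVar k) (shift (Suc k) 0 B)) = Meet (TVar (Suc k)) (shift (Suc (Suc k)) 0 B)"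
    by (simp add: shift_shift)
  moreover have "sub (replicate (Suc k) (TVarB Top) @ TVarB Top # \<Theta>)
             (tsubst (Suc k) (Meet (TVar (Suc k)) (shift (Suc (Suc k)) 0 B)) S)
             (tsubst (Suc k) (Meet (TVar (Suc k)) (shift (Suc (Suc k)) 0 B)) T)"
    using SAll.IH[of "Suc k"] SAll.prems by simp
  ultimately show ?case by (simp add: sub.SAll)
qed (auto intro: sub.intros)

lemma sub_msubst_mono:
  "sub \<Gamma> Bm Am \<Longrightarrow> sub \<Gamma> Ap Bp \<Longrightarrow> sub \<Gamma> (msubst k Am Ap T) (msubst k Bm Bp T)"
proof (induction T arbitrary: \<Gamma> k Am Ap Bm Bp)
  case (All T)
  then show ?case
    using sub_weakening_Cons[OF All.prems(1)] sub_weakening_Cons[OF All.prems(2)]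
    by (simp add: sub.SAll)
next
  case (Meet T1 T2)
  then show ?case by (auto intro!: sub.SMeetI intro: sub.STrans sub.SMeet1 sub.SMeet2)
qed (simp_all add: sub.SRefl sub.SArr)

theorem lemma3p8:
  assumes "wf_env \<Theta>"
    and "wf_ty \<Theta> S0" and "wf_ty \<Theta> T0"
    and "wf_ty (TVarB S0 # \<Theta>) S1" and "wf_ty (TVarB S0 # \<Theta>) T1"
    and "sub \<Theta> T0 S0"
    and "sub (TVarB S0 # \<Theta>) S1 T1"
  shows "sub \<Theta> (All (tsubst 0 (Meet (TVar 0) (shift 1 0 S0)) S1))
                 (All (nsubst 0 (Meet (TVar 0) (shift 1 0 T0)) T1))"
proof -
  let ?V = "Meet (TVar 0) (shift 1 0 S0)"
  let ?W = "Meet (TVar 0) (shift 1 0 T0)"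
  have unbounded: "sub (TVarB Top # \<Theta>) (tsubst 0 ?V S1) (tsubst 0 ?V T1)"
    using sub_tsubst_Meet_bound[OF assms(7), of 0] by simp
  have "sub (TVarB Top # \<Theta>) (shift 1 0 T0) (shift 1 0 S0)"
    using assms(6) by (rule sub_weakening_Cons)
  then have "sub (TVarB Top # \<Theta>) ?W ?V"
    by (intro sub.SMeetI sub.SMeet1 sub.STrans[OF sub.SMeet2])
  then have "sub (TVarB Top # \<Theta>) (msubst 0 ?V ?V T1) (msubst 0 ?W (TVar 0) T1)"
    using sub.SMeet1 by (rule sub_msubst_mono)
  then have "sub (TVarB Top # \<Theta>) (tsubst 0 ?V T1) (nsubst 0 ?W T1)"
    by (simp add: nsubst_def tsubst_eq_msubst)
  with unbounded have "sub (TVarB Top # \<Theta>) (tsubst 0 ?V S1) (nsubst 0 ?W T1)"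
    by (rule sub.STrans)
  then show ?thesis by (rule sub.SAll)
qed

end
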